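(* Let $M$ be an $n\times n$ ($n\geq 2$) primitive Boolean matrix with Boolean rank $b(M)=b$. Then $$k(M)\leq \left\lceil\frac{(b-1)^2+1}{2}\right\rceil +1.$$
   Context: Boolean matrices are $(0,1)$-matrices with Boolean arithmetic ($1+1=1$). A square Boolean matrix $M$ is primitive if some power $M^r$ has all entries equal to $1$. The scrambling index $k(M)$ of a primitive matrix $M$ is the smallest positive integer $k$ such that any two rows of $M^k$ have a $1$ in a common position; equivalently, the smallest $k$ with $M^k(M^t)^k=J$ (the all-ones matrix). The Boolean rank $b(M)$ of an $m\times n$ nonzero Boolean matrix $M$ is the smallest positive integer $b$ such that $M=AB$ for some $m\times b$ Boolean matrix $A$ and $b\times n$ Boolean matrix $B$ (Boolean product). *)

theory Defs
  imports Complex_Main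
begin

text \<open>Boolean matrices are represented as functions nat => nat => bool; an m x n matrix
  is such a function of which only entries with row index < m and column index < n matter.\<close>

definition bmult :: "nat \<Rightarrow> (nat \<Rightarrow> nat \<Rightarrow> bool) \<Rightarrow> (nat \<Rightarrow> nat \<Rightarrow> bool) \<Rightarrow> (nat \<Rightarrow> nat \<Rightarrow> bool)" where
  "bmult p A B = (\<lambda>i j. \<exists>l<p. A i l \<and> B l j)"

fun bpow :: "nat \<Rightarrow> (nat \<Rightarrow> nat \<Rightarrow> bool) \<Rightarrow> nat \<Rightarrow> (nat \<Rightarrow> nat \<Rightarrow> bool)" where
  "bpow n M 0 = (\<lambda>i j. i = j)"
| "bpow n M (Suc k) = bmult n (bpow n M k) M"

definition primitive :: "nat \<Rightarrow> (nat \<Rightarrow> nat \<Rightarrow> bool) \<Rightarrow> bool" where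
  "primitive n M = (\<exists>r>0. \<forall>i<n. \<forall>j<n. bpow n M r i j)"

definition scrambling_index :: "nat \<Rightarrow> (nat \<Rightarrow> nat \<Rightarrow> bool) \<Rightarrow> nat" where
  "scrambling_index n M =
     (LEAST k. k > 0 \<and> (\<forall>i<n. \<forall>j<n. \<exists>l<n. bpow n M k i l \<and> bpow n M k j l))"

definition boolean_rank :: "nat \<Rightarrow> nat \<Rightarrow> (nat \<Rightarrow> nat \<Rightarrow> bool) \<Rightarrow> nat" where
  "boolean_rank m n M =
     (LEAST b. b > 0 \<and> (\<exists>A B. \<forall>i<m. \<forall>j<n. M i j = bmult b A B i j))"

end

theory Submission
  imports Defs
begin

text \<open>Write M = A B with b = b(M) minimal; minimality forces every index of the factorization to
  be used, so N = B A is a primitive b \<times> b matrix and M^(k+1) = A N^k B gives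
  k(M) \<le> k(N) + 1. For a primitive digraph on m vertices with girth s (s < m), every vertex
  reaches a shortest cycle C in m - s steps, and the out-neighbourhood of a vertex of C after
  t laps around C has at least t + 1 elements. Hence two vertices of C have a common
  out-neighbour after (m - 1) div 2 laps, plus half a lap when m is even, and
  k(N) \<le> m - s + ((m - 1) div 2) s (+ s div 2) \<le> (m - 1)^2 div 2 + 1 for m = b.\<close>

section \<open>Powers of Boolean matrices\<close>

definition scrambling :: "nat \<Rightarrow> (nat \<Rightarrow> nat \<Rightarrow> bool) \<Rightarrow> nat \<Rightarrow> bool" where
  "scrambling n M k \<longleftrightarrow> (\<forall>i<n. \<forall>j<n. \<exists>l<n. bpow n M k i l \<and> bpow n M k j l)"

lemma scrambling_index_le: "0 < k \<Longrightarrow> scrambling n M k \<Longrightarrow> scrambling_index n M \<le> k"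
  unfolding scrambling_index_def scrambling_def by (rule Least_le) simp

lemma bpow_1: "x < m \<Longrightarrow> bpow m N 1 x y \<longleftrightarrow> N x y"
  by (auto simp: bmult_def)

lemma bpow_SucI: "bpow m N k x z \<Longrightarrow> z < m \<Longrightarrow> N z y \<Longrightarrow> bpow m N (Suc k) x y"
  by (auto simp: bmult_def)

lemma bpow_add:
  "z < m \<Longrightarrow> bpow m N (a + b) x z \<longleftrightarrow> (\<exists>y<m. bpow m N a x y \<and> bpow m N b y z)"
proof (induction b arbitrary: z)
  case 0
  then show ?case by auto
next
  case (Suc b)
  have "bpow m N (a + Suc b) x z \<longleftrightarrow> (\<exists>l<m. bpow m N (a + b) x l \<and> N l z)"
    by (simp add: bmult_def)
  also have "\<dots> \<longleftrightarrow> (\<exists>l<m. (\<exists>y<m. bpow m N a x y \<and> bpow m N b y l) \<and> N l z)"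
    using Suc.IH by auto
  also have "\<dots> \<longleftrightarrow> (\<exists>y<m. bpow m N a x y \<and> bpow m N (Suc b) y z)"
    by (auto simp: bmult_def)
  finally show ?case .
qed

lemma bpow_imp_walk:
  assumes "x < m" "y < m" "bpow m N k x y"
  shows "\<exists>p. p 0 = x \<and> p k = y \<and> (\<forall>i\<le>k. p i < m) \<and> (\<forall>i<k. N (p i) (p (Suc i)))"
  using assms(2,3)
proof (induction k arbitrary: y)
  case 0
  then show ?case using assms(1) by (intro exI[of _ "\<lambda>_. x"]) auto
next
  case (Suc k)
  then obtain l where l: "l < m" "bpow m N k x l" "N l y" by (auto simp: bmult_def)
  then obtain p where "p 0 = x" "p k = l" "\<forall>i\<le>k. p i < m" "\<forall>i<k. N (p i) (p (Suc i))"
    using Suc.IH by blast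
  then show ?case
    using l Suc.prems by (intro exI[of _ "p(Suc k := y)"]) (auto simp: le_Suc_eq less_Suc_eq)
qed

section \<open>The scrambling bound for primitive digraphs\<close>

lemma card_disjoint_halves:
  assumes "X \<subseteq> {..<2 * h}" "Y \<subseteq> {..<2 * h}" "X \<inter> Y = {}" "h \<le> card X" "h \<le> card Y"
  shows "card X = h" "card Y = h" "X \<union> Y = {..<2 * h}"
proof -
  have fin: "finite X" "finite Y" using assms(1,2) finite_subset by blast+
  have "card X + card Y \<le> 2 * h"
    using card_Un_disjoint[OF fin assms(3)] card_mono[of "{..<2 * h}" "X \<union> Y"] assms(1,2)
    by simp
  then show "card X = h" "card Y = h" using assms(4,5) by simp_all
  then have "card (X \<union> Y) = card {..<2 * h}"
    using card_Un_disjoint[OF fin assms(3)] by simp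
  then show "X \<union> Y = {..<2 * h}"
    using assms(1,2) by (intro card_subset_eq) auto
qed

lemma girth_meet_time_bound:
  fixes m s :: nat
  assumes "0 < s" "s < m"
  shows "m - s + ((m - 1) div 2 * s + (if odd m then 0 else s div 2)) \<le> (m - 1)^2 div 2 + 1"
proof (cases "odd m")
  case True
  define p where "p = (m - 3) div 2"
  have m: "m = 2 * p + 3" using True assms unfolding p_def by presburger
  have "p * s \<le> p * (2 * p + 2)" using assms m by (intro mult_le_mono2) simp
  moreover have "(m - 1)^2 div 2 = 2 * (p + 1)^2" "(m - 1) div 2 = p + 1"
    by (simp_all add: m power2_eq_square algebra_simps)
  ultimately show ?thesis using True assms m by (simp add: power2_eq_square algebra_simps)
next
  case False
  define q where "q = (m - 2) div 2"
  have m: "m = 2 * q + 2" using False assms unfolding q_def by presburger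
  have sq: "(m - 1)^2 div 2 = q * (2 * q) + 2 * q" "(m - 1) div 2 = q"
    by (simp_all add: m power2_eq_square algebra_simps)
  have s: "s \<le> 2 * q + 1" using assms m by simp
  have lhs: "m - s + ((m - 1) div 2 * s + (if odd m then 0 else s div 2)) =
      2 * q + 2 - s + (q * s + s div 2)"
    using False m sq by simp
  consider h where "s = 2 * h" "1 \<le> h" | h where "s = 2 * h + 1"
    by (metis evenE oddE assms(1) mult_0_right neq0_conv less_one not_less)
  then show ?thesis
  proof cases
    case 1
    then have "h * (2 * q) \<le> q * (2 * q)" "q * s = h * (2 * q)" "s div 2 = h"
      using s by auto
    then show ?thesis unfolding lhs sq(1) using 1 s by linarith
  next
    case 2
    then have hq: "h \<le> q" "h * (2 * q) \<le> q * (2 * q)" "q * s = h * (2 * q) + q" "s div 2 = h"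
      using s by auto
    have "(q - h) * 1 \<le> (q - h) * (2 * q) \<or> q = 0" by (cases "q = 0") (auto intro: mult_le_mono2)
    then have "q - h \<le> q * (2 * q) - h * (2 * q)" using hq by (auto simp: diff_mult_distrib)
    then show ?thesis unfolding lhs sq(1) using 2 s hq by linarith
  qed
qed

locale primitive_digraph =
  fixes m :: nat and N :: "nat \<Rightarrow> nat \<Rightarrow> bool"
  assumes nonempty: "0 < m" and primitive: "primitive m N"
begin

abbreviation reach :: "nat \<Rightarrow> nat \<Rightarrow> nat \<Rightarrow> bool" where
  "reach k x y \<equiv> bpow m N k x y"

definition exponent :: nat where
  "exponent = (SOME r. 0 < r \<and> (\<forall>x<m. \<forall>y<m. reach r x y))"

lemma exponent: "0 < exponent" "x < m \<Longrightarrow> y < m \<Longrightarrow> reach exponent x y"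
proof -
  have "0 < exponent \<and> (\<forall>x<m. \<forall>y<m. reach exponent x y)"
    unfolding exponent_def by (rule someI_ex) (use primitive in \<open>simp add: primitive_def\<close>)
  then show "0 < exponent" "x < m \<Longrightarrow> y < m \<Longrightarrow> reach exponent x y" by auto
qed

lemma row_nonempty: "x < m \<Longrightarrow> \<exists>y<m. N x y"
proof -
  assume x: "x < m"
  have "reach (1 + (exponent - 1)) x x" using exponent x by simp
  then show ?thesis using bpow_add[OF x] bpow_1[OF x] by blast
qed

lemma reach_some: "x < m \<Longrightarrow> \<exists>y<m. reach k x y"
proof (induction k)
  case (Suc k)
  then obtain y z where "y < m" "reach k x y" "z < m" "N y z"
    using row_nonempty by blast
  then show ?case by (blast intro: bpow_SucI)
qed auto

lemma reach_all: "exponent \<le> k \<Longrightarrow> x < m \<Longrightarrow> y < m \<Longrightarrow> reach k x y"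
  using reach_some[of x "k - exponent"] exponent
    bpow_add[where a = "k - exponent" and b = exponent and z = y and x = x]
  by auto

definition out :: "nat \<Rightarrow> nat set \<Rightarrow> nat set" where
  "out k Z = {y. y < m \<and> (\<exists>x\<in>Z. reach k x y)}"

lemma out_subset: "out k Z \<subseteq> {..<m}"
  by (auto simp: out_def)

lemma finite_out: "finite (out k Z)"
  using out_subset finite_subset by blast

lemma out_0: "Z \<subseteq> {..<m} \<Longrightarrow> out 0 Z = Z"
  by (auto simp: out_def)

lemma out_mono: "Z \<subseteq> Z' \<Longrightarrow> out k Z \<subseteq> out k Z'"
  by (auto simp: out_def)

lemma out_out: "out k (out l Z) = out (l + k) Z"
  by (auto simp: out_def bpow_add; blast)

lemma out_eq_all: "Z \<subseteq> {..<m} \<Longrightarrow> Z \<noteq> {} \<Longrightarrow> exponent \<le> k \<Longrightarrow> out k Z = {..<m}"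
  using reach_all by (auto simp: out_def) blast

lemma out_fixed_eq_all:
  assumes Z: "Z \<subseteq> {..<m}" "Z \<noteq> {}" and d: "0 < d" and fixed: "out d Z = Z"
  shows "Z = {..<m}"
proof -
  have "out (q * d) Z = Z" for q
  proof (induction q)
    case (Suc q)
    then show ?case using fixed out_out[of d "q * d" Z] by (simp add: add.commute)
  qed (use Z in \<open>simp add: out_0\<close>)
  moreover have "exponent \<le> exponent * d" using d by simp
  ultimately show ?thesis using out_eq_all[OF Z] by metis
qed

definition meet :: "nat \<Rightarrow> nat \<Rightarrow> nat \<Rightarrow> bool" where
  "meet k x y \<longleftrightarrow> (\<exists>w<m. reach k x w \<and> reach k y w)"

lemma scrambling_iff_meet: "scrambling m N k \<longleftrightarrow> (\<forall>x<m. \<forall>y<m. meet k x y)"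
  by (simp add: scrambling_def meet_def)

lemma meet_iff_out: "meet k x y \<longleftrightarrow> out k {x} \<inter> out k {y} \<noteq> {}"
  by (auto simp: meet_def out_def)

lemma meet_commute: "meet k x y \<longleftrightarrow> meet k y x"
  by (auto simp: meet_def)

lemma meet_refl: "x < m \<Longrightarrow> meet k x x"
  using reach_some by (auto simp: meet_def)

lemma meet_mono: "meet k x y \<Longrightarrow> k \<le> K \<Longrightarrow> meet K x y"
proof -
  assume "meet k x y" "k \<le> K"
  then obtain w w' where "w < m" "reach k x w" "reach k y w" "w' < m" "reach (K - k) w w'"
    using reach_some unfolding meet_def by blast
  then have "reach (k + (K - k)) x w'" "reach (k + (K - k)) y w'"
    using bpow_add by blast+
  then show "meet K x y" using \<open>k \<le> K\<close> \<open>w' < m\<close> by (auto simp: meet_def)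
qed

lemma meet_add:
  "reach j x x' \<Longrightarrow> reach j y y' \<Longrightarrow> x' < m \<Longrightarrow> y' < m \<Longrightarrow> meet k x' y' \<Longrightarrow> meet (j + k) x y"
  unfolding meet_def using bpow_add by blast

definition girth :: nat where
  "girth = (LEAST s. 0 < s \<and> (\<exists>x<m. reach s x x))"

lemma girth: "0 < girth" "\<exists>x<m. reach girth x x"
proof -
  have "0 < exponent \<and> (\<exists>x<m. reach exponent x x)" using exponent nonempty by blast
  then have "0 < girth \<and> (\<exists>x<m. reach girth x x)" unfolding girth_def by (rule LeastI)
  then show "0 < girth" "\<exists>x<m. reach girth x x" by auto
qed

lemma girth_minimal: "0 < d \<Longrightarrow> d < girth \<Longrightarrow> x < m \<Longrightarrow> \<not> reach d x x"
  unfolding girth_def by (auto dest: not_less_Least)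

definition cycle_walk :: "nat \<Rightarrow> nat" where
  "cycle_walk = (SOME p. p 0 = p girth \<and> (\<forall>i\<le>girth. p i < m) \<and> (\<forall>i<girth. N (p i) (p (Suc i))))"

lemma cycle_walk:
  "cycle_walk 0 = cycle_walk girth" "\<forall>i\<le>girth. cycle_walk i < m"
  "\<forall>i<girth. N (cycle_walk i) (cycle_walk (Suc i))"
proof -
  obtain x where "x < m" "reach girth x x" using girth by blast
  then have "\<exists>p. p 0 = p girth \<and> (\<forall>i\<le>girth. p i < m) \<and> (\<forall>i<girth. N (p i) (p (Suc i)))"
    using bpow_imp_walk by metis
  then have "cycle_walk 0 = cycle_walk girth \<and> (\<forall>i\<le>girth. cycle_walk i < m) \<and>
      (\<forall>i<girth. N (cycle_walk i) (cycle_walk (Suc i)))"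
    unfolding cycle_walk_def by (rule someI_ex)
  then show "cycle_walk 0 = cycle_walk girth" "\<forall>i\<le>girth. cycle_walk i < m"
    "\<forall>i<girth. N (cycle_walk i) (cycle_walk (Suc i))" by auto
qed

definition cyc :: "nat \<Rightarrow> nat" where
  "cyc i = cycle_walk (i mod girth)"

lemma cyc_less: "cyc i < m"
  using cycle_walk(2) girth(1) by (simp add: cyc_def)

lemma cyc_mod: "cyc (i mod girth) = cyc i"
  by (simp add: cyc_def)

lemma cyc_add_girth: "cyc (i + girth) = cyc i"
  by (simp add: cyc_def)

lemma cyc_edge: "N (cyc i) (cyc (Suc i))"
proof (cases "Suc (i mod girth) < girth")
  case True
  then have "Suc i mod girth = Suc (i mod girth)" by (metis mod_Suc Suc_lessD less_not_refl)
  then show ?thesis using cycle_walk(3) True by (simp add: cyc_def)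
next
  case False
  then have "Suc (i mod girth) = girth" using girth(1) by (meson Suc_lessI mod_less_divisor)
  then have "Suc i mod girth = 0" by (metis mod_Suc)
  then show ?thesis
    using cycle_walk(1,3) \<open>Suc (i mod girth) = girth\<close> by (simp add: cyc_def) (metis lessI)
qed

lemma reach_cyc: "reach d (cyc i) (cyc (i + d))"
proof (induction d)
  case (Suc d)
  then show ?case using bpow_SucI[OF Suc cyc_less cyc_edge[of "i + d"]] by simp
qed simp

lemma inj_on_cyc: "inj_on cyc {..<girth}"
proof (rule linorder_inj_onI)
  fix i j assume "i < j" "j \<in> {..<girth}"
  then have "reach (j - i) (cyc i) (cyc j)" "0 < j - i" "j - i < girth"
    using reach_cyc[of "j - i" i] by auto
  then show "cyc i \<noteq> cyc j" using girth_minimal cyc_less by metis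
qed auto

lemma card_cycle: "card (cyc ` {..<girth}) = girth"
  using inj_on_cyc by (simp add: card_image)

lemma girth_le: "girth \<le> m"
  using card_mono[of "{..<m}" "cyc ` {..<girth}"] card_cycle cyc_less by auto

text \<open>A chord of a shortest cycle would close a shorter cycle.\<close>

lemma cycle_chord:
  assumes edge: "N (cyc i) (cyc j)"
  shows "cyc j = cyc (Suc i)"
proof -
  define d where "d = (i mod girth + girth - j mod girth) mod girth"
  have "j mod girth + (i mod girth + girth - j mod girth) = i mod girth + girth"
    using mod_less_divisor[OF girth(1), of j] by linarith
  then have i: "(j mod girth + d) mod girth = i mod girth"
    unfolding d_def by (metis mod_add_right_eq mod_add_self2 mod_mod_trivial)
  then have "reach d (cyc j) (cyc i)" using reach_cyc[of d "j mod girth"] by (metis cyc_mod)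
  then have "reach (Suc d) (cyc j) (cyc j)" using cyc_less edge by (blast intro: bpow_SucI)
  moreover have "d < girth" using girth(1) by (simp add: d_def)
  ultimately have "Suc d = girth" using girth_minimal cyc_less by (metis Suc_lessI zero_less_Suc)
  have "Suc i mod girth = (j mod girth + Suc d) mod girth"
    using i by (metis add_Suc_right mod_Suc_eq)
  then have "cyc (Suc i) = cyc (j mod girth + girth)"
    using \<open>Suc d = girth\<close> by (metis cyc_mod)
  then show ?thesis by (simp add: cyc_add_girth cyc_mod)
qed

lemma girth_less:
  assumes "2 \<le> m"
  shows "girth < m"
proof (rule ccontr)
  assume "\<not> girth < m"
  then have "cyc ` {..<girth} = {..<m}"
    using girth_le card_cycle cyc_less by (intro card_subset_eq) auto
  then have on_cycle: "\<exists>j. y = cyc j" if "y < m" for y using that by auto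
  have "y = cyc k" if "y < m" "reach k (cyc 0) y" for k y
    using that
  proof (induction k arbitrary: y)
    case (Suc k)
    then obtain l where "l < m" "reach k (cyc 0) l" "N l y" by (auto simp: bmult_def)
    then show ?case using Suc.IH on_cycle[OF Suc.prems(1)] cycle_chord by metis
  qed simp
  then have "0 = cyc exponent" "1 = cyc exponent" using exponent cyc_less assms by auto
  then show False by simp
qed

definition to_cycle :: "nat \<Rightarrow> nat set" where
  "to_cycle j = {x. x < m \<and> (\<exists>i. reach j x (cyc i))}"

lemma to_cycle_subset: "to_cycle j \<subseteq> {..<m}"
  by (auto simp: to_cycle_def)

lemma to_cycle_Suc: "to_cycle (Suc j) = {x. x < m \<and> (\<exists>y<m. N x y \<and> y \<in> to_cycle j)}"
proof -
  have "reach (Suc j) x (cyc i) \<longleftrightarrow> (\<exists>y<m. N x y \<and> reach j y (cyc i))" if "x < m" for x i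
    using bpow_add[OF cyc_less, of N 1 j x] bpow_1[OF that] by simp
  then show ?thesis unfolding to_cycle_def by (auto simp del: bpow.simps) blast+
qed

lemma to_cycle_subset_Suc: "to_cycle j \<subseteq> to_cycle (Suc j)"
  unfolding to_cycle_def using bpow_SucI cyc_less cyc_edge by blast

lemma card_to_cycle: "min m (girth + j) \<le> card (to_cycle j)"
proof (induction j)
  case 0
  have "cyc ` {..<girth} \<subseteq> to_cycle 0" unfolding to_cycle_def using cyc_less by auto
  then have "girth \<le> card (to_cycle 0)"
    using card_mono[OF finite_subset[OF to_cycle_subset]] card_cycle by (metis finite_lessThan)
  then show ?case by simp
next
  case (Suc j)
  have fin: "finite (to_cycle (Suc j))" using to_cycle_subset finite_subset by blast
  show ?case
  proof (cases "to_cycle (Suc j) = to_cycle j")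
    case True
    then have "to_cycle (j + q) = to_cycle j" for q
      by (induction q) (simp_all add: to_cycle_Suc)
    moreover have "to_cycle (j + exponent) = {..<m}"
      using reach_all[of "j + exponent" _ "cyc 0"] cyc_less unfolding to_cycle_def by auto
    ultimately show ?thesis using True by simp
  next
    case False
    then have "card (to_cycle j) < card (to_cycle (Suc j))"
      using fin to_cycle_subset_Suc by (simp add: psubset_card_mono psubset_eq)
    then show ?thesis using Suc by simp
  qed
qed

lemma reach_cycle: "x < m \<Longrightarrow> \<exists>i. reach (m - girth) x (cyc i)"
proof -
  assume "x < m"
  have "m \<le> card (to_cycle (m - girth))" using card_to_cycle[of "m - girth"] girth_le by simp
  then have "to_cycle (m - girth) = {..<m}"
    using to_cycle_subset by (metis card_lessThan card_seteq finite_lessThan)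
  then show ?thesis using \<open>x < m\<close> unfolding to_cycle_def by auto
qed

text \<open>A lap around the cycle never loses a vertex, so these neighbourhoods grow strictly until
  they exhaust the digraph.\<close>

lemma card_out_cyc: "t < m \<Longrightarrow> Suc t \<le> card (out (t * girth) {cyc i})"
proof (induction t)
  case 0
  then show ?case using cyc_less by (simp add: out_0)
next
  case (Suc t)
  let ?Z = "out (t * girth) {cyc i}"
  have "{cyc i} \<subseteq> out girth {cyc i}"
    using reach_cyc[of girth i] cyc_less by (auto simp: out_def cyc_add_girth)
  then have sub: "?Z \<subseteq> out (Suc t * girth) {cyc i}"
    using out_mono out_out[of "t * girth" girth] by (metis add.commute mult_Suc)
  have step: "out (Suc t * girth) {cyc i} = out girth ?Z"
    by (simp add: out_out add.commute)
  show ?case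
  proof (cases "?Z = out (Suc t * girth) {cyc i}")
    case True
    then have "out girth ?Z = ?Z" using step by simp
    moreover have "?Z \<noteq> {}" using Suc by force
    ultimately have "?Z = {..<m}" using out_fixed_eq_all[OF out_subset _ girth(1)] by blast
    then show ?thesis using Suc.prems True by simp
  next
    case False
    then have "card ?Z < card (out (Suc t * girth) {cyc i})"
      using sub finite_out by (intro psubset_card_mono) auto
    then show ?thesis using Suc by simp
  qed
qed

text \<open>If d further steps do not make the neighbourhoods of a and b meet, they map the two
  complementary halves out T {a}, out T {b} onto each other; the halves are then invariant
  under 2d steps, which primitivity forbids.\<close>

lemma meet_step:
  assumes "a < m" "b < m" "e < m" "0 < d" "reach d a b" "reach d b e"
    and m: "m = 2 * h"
    and disjoint: "out T {a} \<inter> out T {b} = {}"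
    and card: "h \<le> card (out T {a})" "h \<le> card (out T {b})" "h \<le> card (out T {e})"
  shows "meet (T + d) a b"
proof (rule ccontr)
  let ?X = "out T {a}" and ?Y = "out T {b}" and ?X' = "out (T + d) {a}" and ?Y' = "out (T + d) {b}"
  assume "\<not> meet (T + d) a b"
  then have disjoint': "?X' \<inter> ?Y' = {}" by (simp add: meet_iff_out)
  have "{b} \<subseteq> out d {a}" "{e} \<subseteq> out d {b}" using assms(2,3,5,6) by (auto simp: out_def)
  then have "out T {b} \<subseteq> out T (out d {a})" "out T {e} \<subseteq> out T (out d {b})"
    by (simp_all add: out_mono)
  then have shift: "?Y \<subseteq> ?X'" "out T {e} \<subseteq> ?Y'" by (simp_all add: out_out add.commute)
  have XY: "card ?X = h" "?X \<union> ?Y = {..<m}"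
    using card_disjoint_halves[OF _ _ disjoint card(1,2)] out_subset m by simp_all
  have "h \<le> card ?X'" "h \<le> card ?Y'"
    using card(2,3) card_mono[OF finite_out shift(1)] card_mono[OF finite_out shift(2)] by simp_all
  then have "card ?X' = h" using card_disjoint_halves[OF _ _ disjoint'] out_subset m by simp
  then have X': "?Y = ?X'" using card(2) by (intro card_seteq[OF finite_out shift(1)]) simp
  then have "?Y' \<subseteq> ?X" using disjoint' XY(2) out_subset[of "T + d" "{b}"] by blast
  then have Y': "?X = ?Y'"
    using XY(1) \<open>h \<le> card ?Y'\<close> by (intro card_seteq[OF finite_out, symmetric]) simp_all
  have "out d ?X = ?X'" "out d ?Y = ?Y'" by (simp_all add: out_out)
  then have "out d ?X = ?Y" "out d ?Y = ?X" using X' Y' by simp_all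
  then have "out (d + d) ?X = ?X" using out_out[of d d ?X] by simp
  moreover have "?X \<noteq> {}" "0 < d + d" using XY(1) m nonempty \<open>0 < d\<close> by auto
  ultimately have "?X = {..<m}" using out_fixed_eq_all[OF out_subset, of T "{a}" "d + d"] by blast
  then have "?Y = {}" using disjoint out_subset[of T "{b}"] by blast
  then show False using card(2) m nonempty by simp
qed

text \<open>After (m - 1) div 2 laps around the shortest cycle the neighbourhoods of two cycle vertices
  have at least half the vertices each; for even m they may be complementary halves, which an
  extra half lap breaks by meet_step.\<close>

definition meet_time :: nat where
  "meet_time = (m - 1) div 2 * girth + (if odd m then 0 else girth div 2)"

lemma meet_cyc_less:
  assumes ij: "i < j" "j < girth"
  shows "meet meet_time (cyc i) (cyc j)"
proof -
  define t where "t = (m - 1) div 2"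
  let ?T = "t * girth"
  have card: "Suc t \<le> card (out ?T {cyc k})" for k
    using card_out_cyc nonempty by (simp add: t_def)
  show ?thesis
  proof (cases "meet ?T (cyc i) (cyc j)")
    case True
    then show ?thesis using meet_mono by (simp add: meet_time_def t_def)
  next
    case False
    then have disjoint: "out ?T {cyc i} \<inter> out ?T {cyc j} = {}" by (simp add: meet_iff_out)
    have "card (out ?T {cyc i} \<union> out ?T {cyc j}) \<le> m"
      using card_mono[of "{..<m}"] out_subset by (metis Un_subset_iff card_lessThan finite_lessThan)
    then have "card (out ?T {cyc i}) + card (out ?T {cyc j}) \<le> m"
      using card_Un_disjoint[OF finite_out finite_out disjoint] by simp
    then have "2 * Suc t \<le> m" using card[of i] card[of j] by simp
    then have even: "\<not> odd m" and m: "m = 2 * Suc t" unfolding t_def by presburger+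
    define d where "d = j - i"
    have d: "0 < d" "d < girth" "i + d = j" "j + (girth - d) = i + girth"
      using ij by (auto simp: d_def)
    have "reach d (cyc i) (cyc j)" using reach_cyc[of d i] d(3) by simp
    from meet_step[OF cyc_less cyc_less cyc_less d(1) this reach_cyc m disjoint card card card]
    have meet1: "meet (?T + d) (cyc i) (cyc j)" .
    have "0 < girth - d" "out ?T {cyc j} \<inter> out ?T {cyc i} = {}"
      using d(2) disjoint by auto
    moreover have "reach (girth - d) (cyc j) (cyc i)"
      using reach_cyc[of "girth - d" j] d(4) by (simp add: cyc_add_girth)
    ultimately have "meet (?T + (girth - d)) (cyc j) (cyc i)"
      using meet_step[OF cyc_less cyc_less cyc_less _ _ reach_cyc m _ card card card] by blast
    with meet1 have "meet (?T + min d (girth - d)) (cyc i) (cyc j)"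
      by (simp add: min_def meet_commute[of _ "cyc j"])
    moreover have "?T + min d (girth - d) \<le> meet_time"
    proof -
      have "min d (girth - d) \<le> girth div 2" unfolding min_def by presburger
      then show ?thesis using even by (simp add: meet_time_def t_def)
    qed
    ultimately show ?thesis by (rule meet_mono)
  qed
qed

lemma meet_cyc: "meet meet_time (cyc i) (cyc j)"
proof -
  have "i mod girth < girth" "j mod girth < girth" using girth(1) by simp_all
  then have "meet meet_time (cyc (i mod girth)) (cyc (j mod girth))"
  proof (cases "i mod girth" "j mod girth" rule: linorder_cases)
    case greater
    then show ?thesis using meet_cyc_less \<open>i mod girth < girth\<close> meet_commute by blast
  qed (simp_all add: meet_cyc_less meet_refl cyc_less)
  then show ?thesis by (simp add: cyc_mod)
qed

lemma scrambling_girth: "scrambling m N (m - girth + meet_time)"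
  unfolding scrambling_iff_meet
proof (intro allI impI)
  fix x y assume "x < m" "y < m"
  then obtain i j where "reach (m - girth) x (cyc i)" "reach (m - girth) y (cyc j)"
    using reach_cycle by blast
  then show "meet (m - girth + meet_time) x y"
    using meet_add[OF _ _ cyc_less cyc_less meet_cyc] by blast
qed

lemma scrambling_mono: "scrambling m N k \<Longrightarrow> k \<le> K \<Longrightarrow> scrambling m N K"
  unfolding scrambling_iff_meet using meet_mono by blast

lemma scrambling_bound: "scrambling m N ((m - 1)^2 div 2 + 1)"
proof (cases "m = 1")
  case True
  then show ?thesis using meet_refl unfolding scrambling_iff_meet by simp
next
  case False
  then have "0 < girth" "girth < m" using girth(1) girth_less nonempty by auto
  then have "m - girth + meet_time \<le> (m - 1)^2 div 2 + 1"
    using girth_meet_time_bound unfolding meet_time_def by blast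
  then show ?thesis using scrambling_girth scrambling_mono by blast
qed

end

lemma primitive_scrambling: "primitive m N \<Longrightarrow> scrambling m N ((m - 1)^2 div 2 + 1)"
proof (cases "m = 0")
  case False
  assume "primitive m N"
  then interpret primitive_digraph m N using False by unfold_locales auto
  show ?thesis by (rule scrambling_bound)
qed (simp add: scrambling_def)

section \<open>Boolean rank factorizations\<close>

lemma bmult_skip_unused:
  assumes "l0 < b" and unused: "\<not> (A i l0 \<and> B l0 j)"
  shows "bmult b A B i j \<longleftrightarrow>
    bmult (b - 1) (\<lambda>i l. A i (if l < l0 then l else Suc l)) (\<lambda>l j. B (if l < l0 then l else Suc l) j) i j"
    (is "_ \<longleftrightarrow> bmult _ (\<lambda>i l. A i (?f l)) (\<lambda>l j. B (?f l) j) _ _")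
proof
  assume "bmult b A B i j"
  then obtain l where l: "l < b" "A i l" "B l j" by (auto simp: bmult_def)
  then have "l \<noteq> l0" using unused by blast
  then have "l = ?f (if l < l0 then l else l - 1)" "(if l < l0 then l else l - 1) < b - 1"
    using l(1) assms(1) by auto
  then show "bmult (b - 1) (\<lambda>i l. A i (?f l)) (\<lambda>l j. B (?f l) j) i j"
    using l unfolding bmult_def by metis
next
  assume "bmult (b - 1) (\<lambda>i l. A i (?f l)) (\<lambda>l j. B (?f l) j) i j"
  then obtain l where "l < b - 1" "A i (?f l)" "B (?f l) j" by (auto simp: bmult_def)
  moreover have "?f l < b" using \<open>l < b - 1\<close> assms(1) by auto
  ultimately show "bmult b A B i j" unfolding bmult_def by blast
qed

lemma boolean_rank_factorization:
  assumes nonzero: "\<exists>i<m. \<exists>j<n. M i j"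
  obtains A B where "\<forall>i<m. \<forall>j<n. M i j = bmult (boolean_rank m n M) A B i j"
    "\<forall>l<boolean_rank m n M. \<exists>i<m. \<exists>j<n. A i l \<and> B l j"
proof -
  let ?P = "\<lambda>b. 0 < b \<and> (\<exists>A B. \<forall>i<m. \<forall>j<n. M i j = bmult b A B i j)"
  let ?b = "boolean_rank m n M"
  have "\<forall>i<m. \<forall>j<n. M i j = bmult n M (\<lambda>l j. l = j) i j" by (auto simp: bmult_def)
  moreover have "0 < n" using nonzero by auto
  ultimately have "?P n" by blast
  then have "?P ?b" unfolding boolean_rank_def by (rule LeastI)
  then obtain A B where pos: "0 < ?b" and fac: "\<forall>i<m. \<forall>j<n. M i j = bmult ?b A B i j" by blast
  have "\<exists>i<m. \<exists>j<n. A i l \<and> B l j" if l: "l < ?b" for l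
  proof (rule ccontr)
    let ?f = "\<lambda>k. if k < l then k else Suc k"
    assume "\<not> ?thesis"
    then have fac': "\<forall>i<m. \<forall>j<n. M i j = bmult (?b - 1) (\<lambda>i k. A i (?f k)) (\<lambda>k j. B (?f k) j) i j"
      using fac bmult_skip_unused[OF l] by blast
    show False
    proof (cases "?b - 1 = 0")
      case True
      then show False using fac' nonzero by (simp add: bmult_def) blast
    next
      case False
      then have "?P (?b - 1)" using fac' by blast
      then show False using not_less_Least[of "?b - 1" ?P] pos
        unfolding boolean_rank_def by simp
    qed
  qed
  with fac that show thesis by blast
qed

lemma bpow_Suc_factor:
  assumes fac: "\<forall>i<n. \<forall>j<n. M i j = bmult b A B i j" and "i < n" "j < n"
  shows "bpow n M (Suc k) i j \<longleftrightarrow> (\<exists>l<b. \<exists>l'<b. A i l \<and> bpow b (bmult n B A) k l l' \<and> B l' j)"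
  using assms(3)
proof (induction k arbitrary: j)
  case 0
  then show ?case using fac bpow_1[OF \<open>i < n\<close>] by (auto simp: bmult_def)
next
  case (Suc k)
  have IH: "\<forall>p<n. bpow n M (Suc k) i p \<longleftrightarrow>
      (\<exists>l<b. \<exists>l'<b. A i l \<and> bpow b (bmult n B A) k l l' \<and> B l' p)"
    using Suc.IH by blast
  have "bpow n M (Suc (Suc k)) i j \<longleftrightarrow> (\<exists>p<n. bpow n M (Suc k) i p \<and> M p j)"
    by (simp only: bpow.simps(2) bmult_def)
  also have "\<dots> \<longleftrightarrow> (\<exists>p<n. (\<exists>l<b. \<exists>l'<b. A i l \<and> bpow b (bmult n B A) k l l' \<and> B l' p)
                            \<and> (\<exists>q<b. A p q \<and> B q j))"
  proof -
    have "\<forall>p<n. M p j \<longleftrightarrow> (\<exists>q<b. A p q \<and> B q j)" using fac Suc.prems by (simp add: bmult_def)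
    then show ?thesis using IH by (metis (no_types, lifting))
  qed
  also have "\<dots> \<longleftrightarrow> (\<exists>l<b. \<exists>q<b. A i l \<and> bpow b (bmult n B A) (Suc k) l q \<and> B q j)"
    unfolding bpow.simps(2) bmult_def by blast
  finally show ?case .
qed

lemma primitive_swap:
  assumes fac: "\<forall>i<n. \<forall>j<n. M i j = bmult b A B i j"
    and used: "\<forall>l<b. \<exists>i<n. \<exists>j<n. A i l \<and> B l j"
    and "primitive n M"
  shows "primitive b (bmult n B A)"
proof -
  obtain r where r: "0 < r" "\<forall>i<n. \<forall>j<n. bpow n M r i j"
    using \<open>primitive n M\<close> unfolding primitive_def by blast
  have "bpow b (bmult n B A) (Suc r) x y" if x: "x < b" and y: "y < b" for x y
  proof -
    obtain i where i: "i < n" "B x i" using used x by blast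
    obtain j where j: "j < n" "A j y" using used y by blast
    have "bpow n M (Suc (r - 1)) i j" using r i j by simp
    then obtain p q where pq: "p < b" "q < b" "A i p" "bpow b (bmult n B A) (r - 1) p q" "B q j"
      using bpow_Suc_factor[OF fac i(1) j(1)] by blast
    have "bmult n B A x p" "bmult n B A q y" using i j pq unfolding bmult_def by blast+
    then have "bpow b (bmult n B A) (1 + (r - 1)) x q"
      using bpow_add[OF pq(2)] bpow_1[OF x] pq by blast
    then have "bpow b (bmult n B A) r x q" using r(1) by simp
    then show ?thesis using pq(2) \<open>bmult n B A q y\<close> by (rule bpow_SucI)
  qed
  then show ?thesis unfolding primitive_def by blast
qed

lemma scrambling_Suc_factor:
  assumes fac: "\<forall>i<n. \<forall>j<n. M i j = bmult b A B i j"
    and used: "\<forall>l<b. \<exists>i<n. \<exists>j<n. A i l \<and> B l j"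
    and rows: "\<forall>i<n. \<exists>l<b. A i l"
    and "scrambling b (bmult n B A) k"
  shows "scrambling n M (Suc k)"
  unfolding scrambling_def
proof (intro allI impI)
  fix i j assume i: "i < n" and j: "j < n"
  obtain l l' where l: "l < b" "A i l" "l' < b" "A j l'" using rows i j by blast
  then obtain p where p: "p < b" "bpow b (bmult n B A) k l p" "bpow b (bmult n B A) k l' p"
    using \<open>scrambling b (bmult n B A) k\<close> unfolding scrambling_def by blast
  obtain q where "q < n" "B p q" using used p(1) by blast
  then show "\<exists>q<n. bpow n M (Suc k) i q \<and> bpow n M (Suc k) j q"
    using bpow_Suc_factor[OF fac i] bpow_Suc_factor[OF fac j] l p by blast
qed

lemma ceiling_half_Suc: "\<lceil>(real y + 1) / 2\<rceil> = int (y div 2) + 1"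
proof (rule ceiling_unique)
  have "y \<le> 2 * (y div 2) + 1" "2 * (y div 2) \<le> y" by linarith+
  then have "real y \<le> 2 * real (y div 2) + 1" "2 * real (y div 2) \<le> real y"
    by (simp_all only: of_nat_le_iff[symmetric] of_nat_add of_nat_mult of_nat_numeral of_nat_1)
  then show "(real y + 1) / 2 \<le> real_of_int (int (y div 2) + 1)"
    and "real_of_int (int (y div 2) + 1) - 1 < (real y + 1) / 2" by simp_all
qed

theorem theorem2p3:
  fixes n b :: nat and M :: "nat \<Rightarrow> nat \<Rightarrow> bool"
  assumes "n \<ge> 2"
    and "primitive n M"
    and "boolean_rank n n M = b"
  shows "real (scrambling_index n M) \<le> real_of_int \<lceil>(real ((b - 1)^2) + 1) / 2\<rceil> + 1"
proof -
  interpret primitive_digraph n M using assms(1,2) by unfold_locales auto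
  have "\<exists>i<n. \<exists>j<n. M i j" using row_nonempty nonempty by blast
  then obtain A B where fac: "\<forall>i<n. \<forall>j<n. M i j = bmult b A B i j"
    and used: "\<forall>l<b. \<exists>i<n. \<exists>j<n. A i l \<and> B l j"
    unfolding assms(3)[symmetric] by (rule boolean_rank_factorization)
  have rows: "\<forall>i<n. \<exists>l<b. A i l"
  proof (intro allI impI)
    fix i assume "i < n"
    then obtain j where "j < n" "M i j" using row_nonempty by blast
    then show "\<exists>l<b. A i l" using fac \<open>i < n\<close> by (auto simp: bmult_def)
  qed
  have "scrambling b (bmult n B A) ((b - 1)^2 div 2 + 1)"
    using primitive_scrambling primitive_swap[OF fac used assms(2)] by blast
  then have "scrambling n M ((b - 1)^2 div 2 + 2)"
    using scrambling_Suc_factor[OF fac used rows] by simp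
  then have "scrambling_index n M \<le> (b - 1)^2 div 2 + 2" by (simp add: scrambling_index_le)
  then show ?thesis unfolding ceiling_half_Suc by simp
qed

end
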